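(* Let $\mathcal{A}$ be a complex Banach algebra with unity and $a\in\mathcal{A}$. The following are equivalent: (1) $a$ is g$\pi$-Hirano invertible; (2) $a-a^{n+1}\in\mathcal{A}^{qnil}$ for some positive integer $n$; (3) $a^{m}-a^{n}\in\mathcal{A}^{qnil}$ for some positive integers $m,n$ with $m\neq n$.
   Context: $\mathcal{A}^{qnil}$ denotes the set of quasinilpotent elements of $\mathcal{A}$, i.e. those $q$ with spectrum $\sigma(q)=\{0\}$. An element $a\in\mathcal{A}$ is g$\pi$-Hirano invertible if there exists $x\in\mathcal{A}$ with $xax=x$, $ax=xa$ and $a-a^{n+2}x\in\mathcal{A}^{qnil}$ for some positive integer $n$. *)

theory Defs
  imports "HOL-Analysis.Analysis"
begin

class complex_banach_algebra_1 = real_normed_algebra_1 + banach +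
  fixes scaleC :: "complex \<Rightarrow> 'a \<Rightarrow> 'a"
  assumes scaleC_of_real: "scaleC (complex_of_real r) x = scaleR r x"
    and scaleC_add_right: "scaleC c (x + y) = scaleC c x + scaleC c y"
    and scaleC_add_left: "scaleC (c + d) x = scaleC c x + scaleC d x"
    and scaleC_scaleC: "scaleC c (scaleC d x) = scaleC (c * d) x"
    and scaleC_one: "scaleC 1 x = x"
    and mult_scaleC_left: "scaleC c x * y = scaleC c (x * y)"
    and mult_scaleC_right: "x * scaleC c y = scaleC c (x * y)"
    and norm_scaleC: "norm (scaleC c x) = cmod c * norm x"

definition invertible_el :: "'a::ring_1 \<Rightarrow> bool" where
  "invertible_el x \<longleftrightarrow> (\<exists>y. x * y = 1 \<and> y * x = 1)"

definition spectrum :: "'a::complex_banach_algebra_1 \<Rightarrow> complex set" where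
  "spectrum a = {z. \<not> invertible_el (scaleC z 1 - a)}"

definition quasinilpotent :: "'a::complex_banach_algebra_1 \<Rightarrow> bool" where
  "quasinilpotent q \<longleftrightarrow> spectrum q = {0}"

definition gpi_Hirano_invertible :: "'a::complex_banach_algebra_1 \<Rightarrow> bool" where
  "gpi_Hirano_invertible a \<longleftrightarrow>
     (\<exists>x. x * a * x = x \<and> a * x = x * a \<and>
          (\<exists>n::nat. n \<ge> 1 \<and> quasinilpotent (a - a ^ (n + 2) * x)))"

end

theory Submission
  imports Defs "HOL-Computational_Algebra.Formal_Power_Series"
begin

text \<open>
  Call \<open>u\<close> topologically nilpotent if \<open>\<parallel>u\<^sup>k\<parallel>\<^sup>1\<^sup>/\<^sup>k \<rightarrow> 0\<close>.  In a complex Banach algebra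
  this is the same as being quasinilpotent.  For the hard direction, suppose \<open>1 - t q\<close> is
  invertible for all \<open>t \<in> \<complex>\<close>.  Averaging \<open>(1 - \<zeta> t q)\<inverse>\<close> over the \<open>N\<close>-th roots of unity \<open>\<zeta>\<close>
  gives \<open>(1 - t\<^sup>N q\<^sup>N)\<inverse>\<close>.  By uniform continuity of the resolvent on \<open>|t| \<le> R\<close>, these averages
  are equicontinuous in \<open>N\<close> and change little when \<open>N\<close> is replaced by \<open>3 N\<close>.  Walking from
  \<open>t = 0\<close> to \<open>t = R\<close> they therefore stay near \<open>1\<close>, which bounds \<open>R\<^sup>N \<parallel>q\<^sup>N\<parallel>\<close> for large \<open>N\<close>.

  Topological nilpotency passes to products with commuting elements, to sums of mutually
  annihilating elements, and from \<open>u\<^sup>n\<close> to \<open>u\<close>; the rest is algebra.  If \<open>x\<close> is a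
  g\<open>\<pi>\<close>-Hirano inverse, the idempotent \<open>p = a x\<close> splits both \<open>a - a\<^sup>n\<^sup>+\<^sup>2 x\<close> and \<open>a - a\<^sup>n\<^sup>+\<^sup>1\<close>.
  Conversely, if \<open>a - a\<^sup>n\<^sup>+\<^sup>1\<close> is topologically nilpotent, then so is \<open>e\<^sup>2 - e\<close> for \<open>e = a\<^sup>n\<close>.  A
  binomial series then lifts \<open>e\<close> to an idempotent \<open>p\<close> with \<open>p - e\<close> topologically nilpotent, and
  \<open>x = a\<^sup>n\<^sup>-\<^sup>1 p (1 - (p - e))\<inverse>\<close> works.  Finally, \<open>a\<^sup>m - a\<^sup>m\<^sup>+\<^sup>k = a\<^sup>m\<^sup>-\<^sup>1 (a - a\<^sup>k\<^sup>+\<^sup>1)\<close>, and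
  \<open>(a - a\<^sup>k\<^sup>+\<^sup>1)\<^sup>m\<close> is a commuting multiple of this.
\<close>

section \<open>Commuting elements\<close>

lemma power_mult_distrib_commuting:
  fixes u v :: "'a::monoid_mult"
  assumes "u * v = v * u"
  shows "(u * v) ^ k = u ^ k * v ^ k"
proof (induction k)
  case (Suc k)
  have "(u * v) ^ Suc k = u * (v * u ^ k) * v ^ k"
    using Suc by (simp add: mult.assoc)
  also have "\<dots> = u * (u ^ k * v) * v ^ k"
    by (simp add: power_commuting_commutes[OF assms])
  also have "\<dots> = u ^ Suc k * v ^ Suc k"
    by (simp add: mult.assoc)
  finally show ?case .
qed simp

lemma mult_left_commute_if_commute:
  fixes x y z :: "'a::semigroup_mult"
  assumes "x * y = y * x"
  shows "x * (y * z) = y * (x * z)"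
  by (simp add: assms mult.assoc[symmetric])

lemma power_mult_power_commute:
  fixes x y :: "'a::monoid_mult"
  assumes "x * y = y * x"
  shows "x ^ i * y ^ j = y ^ j * x ^ i"
proof -
  have "x * y ^ j = y ^ j * x"
    using power_commuting_commutes[OF assms[symmetric]] by simp
  then show ?thesis
    by (rule power_commuting_commutes)
qed

lemma idempotent_power:
  fixes p :: "'a::monoid_mult"
  assumes "p * p = p" "k > 0"
  shows "p ^ k = p"
  using assms(2)
proof (induction k)
  case (Suc k)
  then show ?case
    using assms(1) by (cases "k = 0") (simp_all add: power_Suc2 del: power_Suc)
qed simp

lemma power_add_orthogonal:
  fixes u v :: "'a::ring_1"
  assumes "u * v = 0" "v * u = 0" "k > 0"
  shows "(u + v) ^ k = u ^ k + v ^ k"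
  using assms(3)
proof (induction k)
  case (Suc k)
  show ?case
  proof (cases "k = 0")
    case False
    have "u ^ k * v = 0" "v ^ k * u = 0"
      using False assms(1,2) by (metis mult.assoc mult_zero_right not0_implies_Suc power_Suc2)+
    then show ?thesis
      using Suc False by (simp add: power_Suc2 algebra_simps del: power_Suc)
  qed simp
qed simp

lemma one_minus_mult_sum_powers:
  fixes x :: "'a::ring_1"
  shows "(1 - x) * (\<Sum>i<n. x ^ i) = 1 - x ^ n" "(\<Sum>i<n. x ^ i) * (1 - x) = 1 - x ^ n"
proof -
  show left: "(1 - x) * (\<Sum>i<n. x ^ i) = 1 - x ^ n"
  proof (induction n)
    case (Suc n)
    have "(1 - x) * (\<Sum>i<Suc n. x ^ i) = (1 - x) * (\<Sum>i<n. x ^ i) + (1 - x) * x ^ n"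
      by (simp add: distrib_left)
    also have "\<dots> = 1 - x ^ Suc n"
      using Suc by (simp add: algebra_simps)
    finally show ?case .
  qed simp
  have "(\<Sum>i<n. x ^ i) * x = x * (\<Sum>i<n. x ^ i)"
    by (simp add: sum_distrib_left sum_distrib_right power_commutes)
  then show "(\<Sum>i<n. x ^ i) * (1 - x) = 1 - x ^ n"
    by (simp add: algebra_simps flip: left)
qed

section \<open>Complex scalars and inverses\<close>

definition of_complex :: "complex \<Rightarrow> 'a::complex_banach_algebra_1" where
  "of_complex c = scaleC c 1"

lemma scaleC_conv_of_complex: "scaleC c x = of_complex c * x"
  by (simp add: of_complex_def mult_scaleC_left)

lemma of_complex_commute: "of_complex c * x = x * of_complex c"
  by (simp add: of_complex_def mult_scaleC_left mult_scaleC_right)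

lemma of_complex_mult: "of_complex (c * d) = (of_complex c * of_complex d :: 'a::complex_banach_algebra_1)"
  by (simp add: of_complex_def mult_scaleC_left scaleC_scaleC)

lemma of_complex_add: "of_complex (c + d) = (of_complex c + of_complex d :: 'a::complex_banach_algebra_1)"
  by (simp add: of_complex_def scaleC_add_left)

lemma of_complex_of_real: "of_complex (complex_of_real r) = (of_real r :: 'a::complex_banach_algebra_1)"
  unfolding of_complex_def scaleC_of_real by (simp add: of_real_def)

lemma of_complex_0 [simp]: "of_complex 0 = (0 :: 'a::complex_banach_algebra_1)"
  using of_complex_of_real[of 0] by simp

lemma of_complex_1 [simp]: "of_complex 1 = (1 :: 'a::complex_banach_algebra_1)"
  using of_complex_of_real[of 1] by simp

lemma of_complex_of_nat: "of_complex (of_nat n) = (of_nat n :: 'a::complex_banach_algebra_1)"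
  using of_complex_of_real[of "real n"] by simp

lemma of_complex_diff: "of_complex (c - d) = (of_complex c - of_complex d :: 'a::complex_banach_algebra_1)"
  using of_complex_add[of "c - d" d] by (metis add_diff_cancel diff_add_cancel)

lemma of_complex_power: "of_complex (c ^ k) = (of_complex c ^ k :: 'a::complex_banach_algebra_1)"
  by (induction k) (simp_all add: of_complex_mult)

lemma of_complex_sum: "of_complex (sum f A) = (\<Sum>i\<in>A. of_complex (f i) :: 'a::complex_banach_algebra_1)"
  by (induction A rule: infinite_finite_induct) (simp_all add: of_complex_add)

lemma norm_of_complex_mult: "norm (of_complex c * x) = cmod c * norm x"
  by (simp flip: scaleC_conv_of_complex add: norm_scaleC)

lemma power_of_complex_mult: "(of_complex c * x) ^ k = of_complex (c ^ k) * x ^ k"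
  by (simp add: power_mult_distrib_commuting[OF of_complex_commute] of_complex_power)

definition inverse_el :: "'a::ring_1 \<Rightarrow> 'a" where
  "inverse_el u = (SOME y. u * y = 1 \<and> y * u = 1)"

lemma invertible_elI: "u * y = 1 \<Longrightarrow> y * u = 1 \<Longrightarrow> invertible_el u"
  by (auto simp: invertible_el_def)

lemma invertible_el_inverse:
  assumes "invertible_el u"
  shows "u * inverse_el u = 1" "inverse_el u * u = 1"
proof -
  have "u * inverse_el u = 1 \<and> inverse_el u * u = 1"
    using assms unfolding invertible_el_def inverse_el_def by (rule someI_ex)
  then show "u * inverse_el u = 1" "inverse_el u * u = 1" by auto
qed

lemma invertible_el_mult:
  fixes u v :: "'a::ring_1"
  assumes "invertible_el u" "invertible_el v"
  shows "invertible_el (u * v)"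
proof (rule invertible_elI)
  note u = invertible_el_inverse[OF assms(1)] and v = invertible_el_inverse[OF assms(2)]
  have "u * v * (inverse_el v * inverse_el u) = u * (v * inverse_el v) * inverse_el u"
    by (simp add: mult.assoc)
  then show "u * v * (inverse_el v * inverse_el u) = 1" using u v by simp
  have "inverse_el v * inverse_el u * (u * v) = inverse_el v * (inverse_el u * u) * v"
    by (simp add: mult.assoc)
  then show "inverse_el v * inverse_el u * (u * v) = 1" using u v by simp
qed

lemma inverse_el_commute:
  fixes u c :: "'a::ring_1"
  assumes "invertible_el u" "u * c = c * u"
  shows "inverse_el u * c = c * inverse_el u"
proof -
  note inv = invertible_el_inverse[OF assms(1)]
  have "inverse_el u * c = inverse_el u * (c * u) * inverse_el u"
    using inv by (simp add: mult.assoc)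
  also have "\<dots> = (inverse_el u * u) * c * inverse_el u"
    by (simp add: assms(2) mult.assoc)
  finally show ?thesis
    using inv by simp
qed

lemma invertible_el_of_complex:
  assumes "z \<noteq> 0"
  shows "invertible_el (of_complex z :: 'a::complex_banach_algebra_1)"
  by (rule invertible_elI[of _ "of_complex (1 / z)"]) (use assms in \<open>simp_all flip: of_complex_mult\<close>)

section \<open>Topologically nilpotent elements\<close>

text \<open>\<open>\<parallel>u\<^sup>k\<parallel>\<^sup>1\<^sup>/\<^sup>k \<rightarrow> 0\<close> stated without roots: \<open>R\<^sup>k \<parallel>u\<^sup>k\<parallel>\<close> is bounded for every \<open>R > 0\<close>.\<close>

definition topo_nilpotent :: "'a::real_normed_algebra_1 \<Rightarrow> bool" where
  "topo_nilpotent u \<longleftrightarrow> (\<forall>R>0. \<exists>C. \<forall>k. R ^ k * norm (u ^ k) \<le> C)"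

lemma topo_nilpotentD:
  assumes "topo_nilpotent u" "R > 0"
  obtains C where "\<And>k. R ^ k * norm (u ^ k) \<le> C"
  using assms unfolding topo_nilpotent_def by blast

lemma topo_nilpotentI_eventually:
  fixes u :: "'a::real_normed_algebra_1"
  assumes "\<And>R. R > 0 \<Longrightarrow> \<exists>N0. \<forall>N\<ge>N0. R ^ N * norm (u ^ N) \<le> 1"
  shows "topo_nilpotent u"
  unfolding topo_nilpotent_def
proof (intro allI impI)
  fix R :: real
  assume "R > 0"
  then obtain N0 where N0: "\<And>N. N \<ge> N0 \<Longrightarrow> R ^ N * norm (u ^ N) \<le> 1"
    using assms by blast
  have "R ^ k * norm (u ^ k) \<le> 1 + (\<Sum>j<N0. R ^ j * norm (u ^ j))" for k
  proof (cases "k < N0")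
    case True
    then have "R ^ k * norm (u ^ k) \<le> (\<Sum>j<N0. R ^ j * norm (u ^ j))"
      using \<open>R > 0\<close> by (intro member_le_sum) auto
    then show ?thesis by simp
  next
    case False
    moreover have "(\<Sum>j<N0. R ^ j * norm (u ^ j)) \<ge> 0"
      using \<open>R > 0\<close> by (intro sum_nonneg) auto
    ultimately show ?thesis using N0[of k] by simp
  qed
  then show "\<exists>C. \<forall>k. R ^ k * norm (u ^ k) \<le> C" by blast
qed

lemma topo_nilpotent_mult_commute:
  fixes u v :: "'a::real_normed_algebra_1"
  assumes "topo_nilpotent u" "u * v = v * u"
  shows "topo_nilpotent (u * v)"
  unfolding topo_nilpotent_def
proof (intro allI impI)
  fix R :: real
  assume R: "R > 0"
  then obtain C where C: "\<And>k. (R * (norm v + 1)) ^ k * norm (u ^ k) \<le> C"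
    using topo_nilpotentD[OF assms(1), of "R * (norm v + 1)"]
    by (metis add_nonneg_pos norm_ge_zero zero_less_mult_iff zero_less_one)
  have "R ^ k * norm ((u * v) ^ k) \<le> C" for k
  proof -
    have "norm ((u * v) ^ k) \<le> norm (u ^ k) * (norm v + 1) ^ k"
      unfolding power_mult_distrib_commuting[OF assms(2)]
      by (intro order.trans[OF norm_mult_ineq] mult_left_mono order.trans[OF norm_power_ineq]
          power_mono) auto
    then have "R ^ k * norm ((u * v) ^ k) \<le> (R * (norm v + 1)) ^ k * norm (u ^ k)"
      using R by (simp add: power_mult_distrib mult_left_mono mult_ac)
    then show ?thesis using C[of k] by linarith
  qed
  then show "\<exists>C. \<forall>k. R ^ k * norm ((u * v) ^ k) \<le> C" by blast
qed

lemma topo_nilpotent_scaleR: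
  fixes u :: "'a::real_normed_algebra_1"
  assumes "topo_nilpotent u"
  shows "topo_nilpotent (c *\<^sub>R u)"
  using topo_nilpotent_mult_commute[OF assms, of "c *\<^sub>R 1"] by simp

lemma topo_nilpotent_uminus:
  fixes u :: "'a::real_normed_algebra_1"
  assumes "topo_nilpotent u"
  shows "topo_nilpotent (- u)"
proof -
  have "norm ((- u) ^ k) = norm (u ^ k)" for k
    by (cases "even k") (simp_all add: power_minus_odd)
  then show ?thesis using assms unfolding topo_nilpotent_def by simp
qed

lemma topo_nilpotent_of_power:
  fixes u :: "'a::real_normed_algebra_1"
  assumes "topo_nilpotent (u ^ n)" "n > 0"
  shows "topo_nilpotent u"
  unfolding topo_nilpotent_def
proof (intro allI impI)
  fix R :: real
  assume R: "R > 0"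
  obtain C where C: "\<And>d. (R ^ n) ^ d * norm ((u ^ n) ^ d) \<le> C"
    using topo_nilpotentD[OF assms(1)] R by (meson zero_less_power)
  have "R ^ k * norm (u ^ k) \<le> C * (1 + R * norm u) ^ n" for k
  proof -
    define d j where "d = k div n" and "j = k mod n"
    have k: "k = n * d + j" by (simp add: d_def j_def)
    have "j < n" using assms(2) by (simp add: j_def)
    have "u ^ k = (u ^ n) ^ d * u ^ j" and Rk: "R ^ k = (R ^ n) ^ d * R ^ j"
      by (simp_all add: k power_add power_mult)
    then have "norm (u ^ k) \<le> norm ((u ^ n) ^ d) * norm u ^ j"
      by (metis norm_mult_ineq norm_ge_zero norm_power_ineq mult_left_mono order.trans)
    then have "R ^ k * norm (u ^ k) \<le> ((R ^ n) ^ d * R ^ j) * (norm ((u ^ n) ^ d) * norm u ^ j)"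
      unfolding Rk using R by (simp add: mult_left_mono)
    also have "\<dots> = ((R ^ n) ^ d * norm ((u ^ n) ^ d)) * (R * norm u) ^ j"
      by (simp add: power_mult_distrib mult_ac)
    also have "\<dots> \<le> C * (1 + R * norm u) ^ n"
    proof (rule mult_mono[OF C])
      have "(R * norm u) ^ j \<le> (1 + R * norm u) ^ j"
        using R by (intro power_mono) auto
      also have "\<dots> \<le> (1 + R * norm u) ^ n"
        using R \<open>j < n\<close> by (intro power_increasing) auto
      finally show "(R * norm u) ^ j \<le> (1 + R * norm u) ^ n" .
      show "0 \<le> C" using C[of 0] by simp
    qed (use R in auto)
    finally show ?thesis .
  qed
  then show "\<exists>C. \<forall>k. R ^ k * norm (u ^ k) \<le> C" by blast
qed

lemma topo_nilpotent_add_orthogonal: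
  fixes u v :: "'a::real_normed_algebra_1"
  assumes "topo_nilpotent u" "topo_nilpotent v" "u * v = 0" "v * u = 0"
  shows "topo_nilpotent (u + v)"
  unfolding topo_nilpotent_def
proof (intro allI impI)
  fix R :: real
  assume R: "R > 0"
  obtain C1 C2 where C1: "\<And>k. R ^ k * norm (u ^ k) \<le> C1" and C2: "\<And>k. R ^ k * norm (v ^ k) \<le> C2"
    using topo_nilpotentD[OF assms(1) R] topo_nilpotentD[OF assms(2) R] by metis
  have "R ^ k * norm ((u + v) ^ k) \<le> C1 + C2" for k
  proof (cases "k = 0")
    case True
    then show ?thesis using C1[of 0] C2[of 0] by simp
  next
    case False
    then have "R ^ k * norm ((u + v) ^ k) \<le> R ^ k * norm (u ^ k) + R ^ k * norm (v ^ k)"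
      using R power_add_orthogonal[OF assms(3,4)]
      by (simp add: distrib_left[symmetric] mult_left_mono norm_triangle_ineq)
    then show ?thesis using C1[of k] C2[of k] by linarith
  qed
  then show "\<exists>C. \<forall>k. R ^ k * norm ((u + v) ^ k) \<le> C" by blast
qed

lemma not_topo_nilpotent_one: "\<not> topo_nilpotent (1 :: 'a::real_normed_algebra_1)"
proof
  assume "topo_nilpotent (1 :: 'a)"
  moreover have "(2 :: real) > 0" by simp
  ultimately obtain C where "\<And>k. 2 ^ k * norm (1 ^ k :: 'a) \<le> C"
    using topo_nilpotentD by blast
  then have "\<And>k. 2 ^ k \<le> C" by simp
  moreover obtain k where "C < 2 ^ k" using real_arch_pow[of 2 C] by auto
  ultimately show False by (meson not_le)
qed

lemma topo_nilpotent_not_invertible: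
  fixes u :: "'a::real_normed_algebra_1"
  assumes "topo_nilpotent u"
  shows "\<not> invertible_el u"
proof
  assume "invertible_el u"
  then obtain y where "u * y = 1" "y * u = 1" by (auto simp: invertible_el_def)
  then have "topo_nilpotent (1 :: 'a)"
    using topo_nilpotent_mult_commute[OF assms, of y] by simp
  then show False using not_topo_nilpotent_one by blast
qed

lemma topo_nilpotent_summable:
  fixes u :: "'a::real_normed_algebra_1"
  assumes "topo_nilpotent u" "\<And>k. \<bar>c k\<bar> \<le> 1"
  shows "summable (\<lambda>k. norm (c k *\<^sub>R u ^ k))"
proof -
  obtain C where C: "\<And>k. 2 ^ k * norm (u ^ k) \<le> C"
    using topo_nilpotentD[OF assms(1)] by (metis zero_less_numeral)
  have "norm (c k *\<^sub>R u ^ k) \<le> C * (1 / 2) ^ k" for k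
  proof -
    have "norm (c k *\<^sub>R u ^ k) \<le> norm (u ^ k)"
      using assms(2)[of k] by (simp add: mult_left_le_one_le)
    also have "\<dots> \<le> C * (1 / 2) ^ k"
      using C[of k] by (simp add: power_one_over field_simps)
    finally show ?thesis .
  qed
  then show ?thesis
    by (intro summable_comparison_test'[where N = 0, OF summable_mult[OF summable_geometric]]) auto
qed

section \<open>Neumann series\<close>

lemma neumann_series:
  fixes w :: "'a::{real_normed_algebra_1,banach}"
  assumes "summable (\<lambda>k. norm (w ^ k))"
  shows "(1 - w) * (\<Sum>k. w ^ k) = 1" "(\<Sum>k. w ^ k) * (1 - w) = 1"
proof -
  have s: "summable (\<lambda>k. w ^ k)"
    using assms by (rule summable_norm_cancel)
  then have partial: "(\<lambda>n. \<Sum>k<n. w ^ k) \<longlonglongrightarrow> (\<Sum>k. w ^ k)"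
    by (rule summable_LIMSEQ)
  have "(\<lambda>n. 1 - w ^ n) \<longlonglongrightarrow> 1 - 0"
    by (intro tendsto_intros summable_LIMSEQ_zero[OF s])
  then have one: "(\<lambda>n. 1 - w ^ n) \<longlonglongrightarrow> 1" by simp
  have "(\<lambda>n. (1 - w) * (\<Sum>k<n. w ^ k)) \<longlonglongrightarrow> (1 - w) * (\<Sum>k. w ^ k)"
    by (intro tendsto_intros partial)
  then show "(1 - w) * (\<Sum>k. w ^ k) = 1"
    using one by (simp add: one_minus_mult_sum_powers LIMSEQ_unique)
  have "(\<lambda>n. (\<Sum>k<n. w ^ k) * (1 - w)) \<longlonglongrightarrow> (\<Sum>k. w ^ k) * (1 - w)"
    by (intro tendsto_intros partial)
  then show "(\<Sum>k. w ^ k) * (1 - w) = 1"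
    using one by (simp add: one_minus_mult_sum_powers LIMSEQ_unique)
qed

lemma topo_nilpotent_invertible_one_minus:
  fixes w :: "'a::{real_normed_algebra_1,banach}"
  assumes "topo_nilpotent w"
  shows "invertible_el (1 - w)"
proof -
  have "summable (\<lambda>k. norm (w ^ k))"
    using topo_nilpotent_summable[OF assms, of "\<lambda>_. 1"] by simp
  then show ?thesis
    using neumann_series by (blast intro: invertible_elI)
qed

section \<open>Quasinilpotent elements\<close>

lemma quasinilpotent_if_topo_nilpotent:
  fixes q :: "'a::complex_banach_algebra_1"
  assumes "topo_nilpotent q"
  shows "quasinilpotent q"
proof -
  have "invertible_el (scaleC z 1 - q)" if "z \<noteq> 0" for z
  proof -
    have "topo_nilpotent (of_complex (1 / z) * q)"
      using topo_nilpotent_mult_commute[OF assms] of_complex_commute by metis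
    then have "invertible_el (of_complex z * (1 - of_complex (1 / z) * q))"
      using that by (intro invertible_el_mult invertible_el_of_complex
          topo_nilpotent_invertible_one_minus)
    moreover have "of_complex z * (1 - of_complex (1 / z) * q) = scaleC z 1 - q"
      using that by (simp add: right_diff_distrib mult.assoc[symmetric] of_complex_def[symmetric]
          flip: of_complex_mult)
    ultimately show ?thesis by simp
  qed
  moreover have "\<not> invertible_el (scaleC 0 1 - q)"
    using topo_nilpotent_not_invertible[OF topo_nilpotent_uminus[OF assms]]
    by (simp flip: of_complex_def)
  ultimately show ?thesis
    unfolding quasinilpotent_def spectrum_def by auto
qed

lemma norm_le_if_left_inverse_near_one:
  fixes A y :: "'a::real_normed_algebra_1"
  assumes "A * (1 - y) = 1" "norm (A - 1) \<le> a" "a < 1"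
  shows "norm y \<le> a / (1 - a)"
proof -
  have "y = (A - 1) * (1 - y)"
    using assms(1) by (simp add: algebra_simps)
  then have "norm y \<le> norm (A - 1) * norm (1 - y)"
    by (metis norm_mult_ineq)
  also have "\<dots> \<le> a * (1 + norm y)"
    using assms(2) norm_triangle_ineq4[of 1 y]
    by (intro mult_mono) (auto intro: order_trans[OF norm_ge_zero])
  finally show ?thesis
    using assms(3) by (simp add: le_divide_eq algebra_simps)
qed

lemma norm_left_inverse_minus_one_le:
  fixes B z :: "'a::real_normed_algebra_1"
  assumes "B * (1 - z) = 1" "norm z < 1"
  shows "norm (B - 1) \<le> norm z / (1 - norm z)"
proof -
  have "B - 1 = B * z"
    using assms(1) by (simp add: algebra_simps)
  then have "norm (B - 1) \<le> norm B * norm z"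
    by (metis norm_mult_ineq)
  also have "\<dots> \<le> (norm (B - 1) + 1) * norm z"
    using norm_triangle_ineq[of "B - 1" 1] by (intro mult_right_mono) auto
  finally show ?thesis
    using assms(2) by (simp add: le_divide_eq algebra_simps)
qed

text \<open>Cubing makes \<open>y\<close> so small that \<open>A\<^sub>3\<close> is within \<open>1/50\<close> of \<open>1\<close>;
  this is what keeps the bound \<open>1/8\<close> from deteriorating along a chain of small steps.\<close>

lemma left_inverse_near_one_of_cube:
  fixes A\<^sub>1 A\<^sub>3 y :: "'a::real_normed_algebra_1"
  assumes "A\<^sub>1 * (1 - y) = 1" "A\<^sub>3 * (1 - y ^ 3) = 1"
    and "norm (A\<^sub>1 - 1) \<le> 3/16" "norm (A\<^sub>1 - A\<^sub>3) \<le> 1/16"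
  shows "norm (A\<^sub>1 - 1) \<le> 1/8"
proof -
  have "norm y \<le> (3/16) / (1 - 3/16)"
    using norm_le_if_left_inverse_near_one[OF assms(1,3)] by simp
  then have "norm (y ^ 3) \<le> (3/13) ^ 3"
    by (intro order.trans[OF norm_power_ineq] power_mono) simp_all
  then have y3: "norm (y ^ 3) \<le> 27/2197"
    by (simp add: power_divide)
  then have "norm (A\<^sub>3 - 1) \<le> norm (y ^ 3) / (1 - norm (y ^ 3))"
    by (intro norm_left_inverse_minus_one_le[OF assms(2)]) simp
  also have "\<dots> \<le> 1/50"
    using y3 by (simp add: pos_divide_le_eq)
  finally show ?thesis
    using assms(4) norm_triangle_ineq[of "A\<^sub>1 - A\<^sub>3" "A\<^sub>3 - 1"] by simp
qed

lemma norm_average_le: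
  fixes f :: "'b \<Rightarrow> 'a::real_normed_vector"
  assumes "finite A" "A \<noteq> {}" "\<And>k. k \<in> A \<Longrightarrow> norm (f k) \<le> e"
  shows "norm ((1 / real (card A)) *\<^sub>R sum f A) \<le> e"
proof -
  have "norm (sum f A) \<le> real (card A) * e"
    using sum_norm_le[of A f "\<lambda>_. e"] assms(3) by simp
  moreover have "card A > 0"
    using assms(1,2) by (simp add: card_gt_0_iff)
  ultimately show ?thesis
    by (simp add: field_simps)
qed

lemma sum_lessThan_mult_eq_sum_product:
  fixes g :: "nat \<Rightarrow> 'a::comm_monoid_add"
  shows "(\<Sum>k<N * M. g k) = (\<Sum>(j, l)\<in>{..<N} \<times> {..<M}. g (j * M + l))"
proof -
  have "(\<Sum>k<N * M. g k) = (\<Sum>j<N. \<Sum>l<M. g (j * M + l))"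
    by (simp add: sum.nat_group[symmetric] sum.shift_bounds_nat_ivl[where m = 0, simplified] add.commute
        atLeast0LessThan)
  then show ?thesis
    by (simp add: sum.cartesian_product)
qed

lemma norm_cis_minus_one_le: "cmod (cis \<theta> - 1) \<le> \<bar>\<theta>\<bar>"
proof -
  have "cis \<theta> - 1 = cis (\<theta> / 2) * (2 * \<i> * complex_of_real (sin (\<theta> / 2)))"
    using cos_double_sin[of "\<theta> / 2"] sin_double[of "\<theta> / 2"]
    by (simp add: complex_eq_iff algebra_simps power2_eq_square)
  then have "cmod (cis \<theta> - 1) = 2 * \<bar>sin (\<theta> / 2)\<bar>"
    by (simp add: norm_mult)
  then show ?thesis
    using abs_sin_x_le_abs_x[of "\<theta> / 2"] by simp
qed

definition root_unity :: "nat \<Rightarrow> complex" where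
  "root_unity N = cis (2 * pi / real N)"

lemma root_unity_power: "root_unity N ^ k = cis (real k * (2 * pi / real N))"
  unfolding root_unity_def by (rule Complex.DeMoivre)

lemma norm_root_unity_power [simp]: "cmod (root_unity N ^ k) = 1"
  by (simp add: root_unity_power)

lemma root_unity_power_power: "N > 0 \<Longrightarrow> (root_unity N ^ k) ^ N = 1"
proof -
  assume "N > 0"
  then have "root_unity N ^ N = 1"
    by (simp add: root_unity_power)
  then show ?thesis
    by (metis mult.commute power_mult power_one)
qed

lemma root_unity_mult_power: "M > 0 \<Longrightarrow> root_unity (N * M) ^ M = root_unity N"
  unfolding root_unity_power by (simp add: root_unity_def)

lemma sum_root_unity_powers:
  assumes "0 < i" "i < N"
  shows "(\<Sum>k<N. (root_unity N ^ i) ^ k) = 0"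
proof -
  have "root_unity N ^ i \<noteq> 1"
  proof
    assume "root_unity N ^ i = 1"
    then have "cos (real i * (2 * pi / real N)) = 1"
      by (simp add: root_unity_power complex_eq_iff)
    then obtain n :: int where "real i * (2 * pi / real N) = n * 2 * pi"
      by (auto simp: cos_one_2pi_int)
    then have "real i = of_int n * real N"
      using assms by (simp add: field_simps)
    then have "int i = n * int N"
      by (metis of_int_eq_iff of_int_mult of_int_of_nat_eq)
    moreover have "n > 0"
      using assms \<open>int i = n * int N\<close>
      by (smt (verit) mult_nonpos_nonneg of_nat_0_le_iff of_nat_0_less_iff)
    ultimately have "int N \<le> int i"
      using mult_right_mono[of 1 n "int N"] by simp
    with assms show False
      by simp
  qed
  then show ?thesis
    using geometric_sum[of "root_unity N ^ i" N] root_unity_power_power[of N i] assms by simp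
qed

lemma norm_root_unity_power_minus_one_less:
  assumes "N > 0" "l < M"
  shows "cmod (root_unity (N * M) ^ l - 1) < 2 * pi / real N"
proof -
  have "cmod (root_unity (N * M) ^ l - 1) \<le> real l * (2 * pi / real (N * M))"
    unfolding root_unity_power by (rule order.trans[OF norm_cis_minus_one_le]) simp
  also have "\<dots> = (real l / real M) * (2 * pi / real N)"
    by (simp add: field_simps)
  also have "\<dots> < 1 * (2 * pi / real N)"
    using assms by (intro mult_strict_right_mono) simp_all
  finally show ?thesis by simp
qed

lemma scaleR_inverse_of_nat: "N > 0 \<Longrightarrow> (1 / real N) *\<^sub>R (of_nat N :: 'a::real_algebra_1) = 1"
  by (metis of_real_def of_real_of_nat_eq scaleR_one scaleR_scaleR nonzero_divide_eq_eq
      of_nat_0_less_iff less_irrefl)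

locale entire_resolvent =
  fixes q :: "'a::complex_banach_algebra_1"
  assumes invertible_one_minus: "invertible_el (1 - of_complex t * q)"
begin

definition res :: "complex \<Rightarrow> 'a" where
  "res t = inverse_el (1 - of_complex t * q)"

lemma res_left_inverse: "res t * (1 - of_complex t * q) = 1"
  and res_right_inverse: "(1 - of_complex t * q) * res t = 1"
  using invertible_el_inverse[OF invertible_one_minus] by (simp_all add: res_def)

lemma res_0: "res 0 = 1"
  using res_left_inverse[of 0] by simp

lemma res_diff: "res t - res t0 = of_complex (t - t0) * (res t * q * res t0)"
proof -
  have "res t - res t0
      = res t * (1 - of_complex t0 * q) * res t0 - res t * (1 - of_complex t * q) * res t0"
    by (simp add: mult.assoc res_left_inverse res_right_inverse)
  also have "\<dots> = res t * ((1 - of_complex t0 * q) - (1 - of_complex t * q)) * res t0"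
    by (simp add: algebra_simps)
  also have "(1 - of_complex t0 * q) - (1 - of_complex t * q) = of_complex (t - t0) * q"
    by (simp add: of_complex_diff left_diff_distrib)
  finally show ?thesis
    by (simp add: mult.assoc[symmetric] of_complex_commute[of "t - t0" "res t", symmetric])
qed

lemma isCont_res: "isCont res t0"
proof -
  define K where "K = norm q * norm (res t0)"
  have bound: "norm (res t - res t0) \<le> 2 * K * norm (res t0) * cmod (t - t0)"
    if small: "cmod (t - t0) * K \<le> 1/2" for t
  proof -
    have "norm (res t * q * res t0) \<le> norm (res t) * K"
      unfolding K_def mult.assoc[of "res t"]
      by (intro order.trans[OF norm_mult_ineq] mult_left_mono norm_mult_ineq) simp
    then have diff: "norm (res t - res t0) \<le> cmod (t - t0) * K * norm (res t)"
      unfolding res_diff norm_of_complex_mult mult.assoc[of "cmod (t - t0)"]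
      by (intro mult_left_mono) (simp_all add: mult_ac)
    also have "\<dots> \<le> norm (res t) / 2"
      using mult_right_mono[OF small, of "norm (res t)"] by simp
    finally have "norm (res t) \<le> 2 * norm (res t0)"
      using norm_triangle_ineq2[of "res t" "res t0"] by simp
    then have "cmod (t - t0) * K * norm (res t) \<le> cmod (t - t0) * K * (2 * norm (res t0))"
      by (intro mult_left_mono) (simp_all add: K_def)
    then show ?thesis
      using diff by (simp add: mult_ac)
  qed
  have "((\<lambda>t. cmod (t - t0) * K) \<longlongrightarrow> cmod (t0 - t0) * K) (at t0)"
    by (intro tendsto_intros)
  then have "eventually (\<lambda>t. cmod (t - t0) * K < 1/2) (at t0)"
    by (rule order_tendstoD(2)) simp
  then have "eventually (\<lambda>t. norm (res t - res t0) \<le> 2 * K * norm (res t0) * cmod (t - t0)) (at t0)"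
    by eventually_elim (use bound in simp)
  moreover have "((\<lambda>t. 2 * K * norm (res t0) * cmod (t - t0)) \<longlongrightarrow> 0) (at t0)"
    using tendsto_mult_left[OF tendsto_norm[OF LIM_zero[OF tendsto_ident_at]], of "2 * K * norm (res t0)" t0]
    by simp
  ultimately have "((\<lambda>t. res t - res t0) \<longlongrightarrow> 0) (at t0)"
    by (rule Lim_null_comparison)
  then show ?thesis
    by (simp add: isCont_def LIM_zero_iff)
qed

lemma uniformly_continuous_on_res: "uniformly_continuous_on (cball 0 R) res"
  by (intro compact_uniformly_continuous continuous_at_imp_continuous_on ballI isCont_res)
    simp

definition root_average :: "nat \<Rightarrow> complex \<Rightarrow> 'a" where
  "root_average N t = (1 / real N) *\<^sub>R (\<Sum>k<N. res (root_unity N ^ k * t))"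

lemma root_average_0: "N > 0 \<Longrightarrow> root_average N 0 = 1"
  by (simp add: root_average_def res_0 scaleR_inverse_of_nat)

lemma root_average_left_inverse:
  assumes "N > 0"
  shows "root_average N t * (1 - of_complex (t ^ N) * q ^ N) = 1"
proof -
  define c where "c k = root_unity N ^ k * t" for k
  define S where "S k = (\<Sum>i<N. (of_complex (c k) * q) ^ i)" for k
  have res_S: "res (c k) * (1 - of_complex (t ^ N) * q ^ N) = S k" for k
  proof -
    have "(of_complex (c k) * q) ^ N = of_complex (t ^ N) * q ^ N"
      using root_unity_power_power[OF assms]
      by (simp add: power_of_complex_mult c_def power_mult_distrib)
    then have "1 - of_complex (t ^ N) * q ^ N = (1 - of_complex (c k) * q) * S k"
      by (simp add: S_def one_minus_mult_sum_powers)
    then show ?thesis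
      by (simp add: mult.assoc[symmetric] res_left_inverse)
  qed
  have sum_c: "(\<Sum>k<N. c k ^ i) = (if i = 0 then of_nat N else 0)" if "i < N" for i
  proof (cases "i = 0")
    case False
    have "c k ^ i = t ^ i * (root_unity N ^ i) ^ k" for k
      by (simp add: c_def power_mult_distrib mult.commute flip: power_mult)
    then have "(\<Sum>k<N. c k ^ i) = t ^ i * (\<Sum>k<N. (root_unity N ^ i) ^ k)"
      by (simp add: sum_distrib_left)
    then show ?thesis
      using False sum_root_unity_powers that by simp
  qed simp
  have "(\<Sum>k<N. S k) = (\<Sum>i<N. of_complex (\<Sum>k<N. c k ^ i) * q ^ i)"
    unfolding S_def power_of_complex_mult
    by (subst sum.swap) (simp add: of_complex_sum sum_distrib_right)
  also have "\<dots> = (\<Sum>i<N. if i = 0 then of_nat N else 0)"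
    by (intro sum.cong) (simp_all add: sum_c of_complex_of_nat)
  also have "\<dots> = of_nat N"
    using assms by simp
  finally have "(\<Sum>k<N. S k) = of_nat N" .
  moreover have "root_average N t = (1 / real N) *\<^sub>R (\<Sum>k<N. res (c k))"
    by (simp add: root_average_def c_def)
  ultimately show ?thesis
    using assms by (simp add: sum_distrib_right res_S scaleR_inverse_of_nat)
qed

lemma root_average_mult_eq_sum_product:
  assumes "M > 0"
  shows "root_average (N * M) t = (1 / real (card ({..<N} \<times> {..<M}))) *\<^sub>R
      (\<Sum>(j, l)\<in>{..<N} \<times> {..<M}. res (root_unity N ^ j * (root_unity (N * M) ^ l * t)))"
proof -
  have "root_unity (N * M) ^ (j * M + l) = root_unity N ^ j * root_unity (N * M) ^ l" for j l
    using root_unity_mult_power[OF assms, of N] by (simp add: power_add power_mult mult.commute)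
  then show ?thesis
    unfolding root_average_def sum_lessThan_mult_eq_sum_product by (simp add: mult.assoc)
qed

lemma root_average_eq_sum_product:
  fixes M :: nat
  assumes "M > 0"
  shows "root_average N t = (1 / real (card ({..<N} \<times> {..<M}))) *\<^sub>R
      (\<Sum>(j, l)\<in>{..<N} \<times> {..<M}. res (root_unity N ^ j * t))"
proof -
  have "(\<Sum>(j, l)\<in>{..<N} \<times> {..<M}. res (root_unity N ^ j * t))
      = real M *\<^sub>R (\<Sum>j<N. res (root_unity N ^ j * t))"
    by (simp add: sum.cartesian_product[symmetric] sum_constant_scaleR scaleR_sum_right
        scaleR_conv_of_real sum_distrib_left)
  then show ?thesis
    using assms by (simp add: root_average_def)
qed

context
  fixes R d :: real
  assumes res_close: "\<And>t t'. cmod t \<le> R \<Longrightarrow> cmod t' \<le> R \<Longrightarrow> cmod (t' - t) < d \<Longrightarrow>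
      norm (res t' - res t) < 1/16"
begin

lemma norm_root_average_diff_le:
  assumes "N > 0" "cmod t \<le> R" "cmod t' \<le> R" "cmod (t' - t) < d"
  shows "norm (root_average N t' - root_average N t) \<le> 1/16"
proof -
  have "root_average N t' - root_average N t
      = (1 / real (card {..<N})) *\<^sub>R (\<Sum>k<N. res (root_unity N ^ k * t') - res (root_unity N ^ k * t))"
    by (simp add: root_average_def sum_subtractf scaleR_diff_right)
  also have "norm \<dots> \<le> 1/16"
  proof (rule norm_average_le)
    fix k
    have "cmod (root_unity N ^ k * t' - root_unity N ^ k * t) < d"
      using assms(4) by (simp add: norm_mult flip: right_diff_distrib)
    then show "norm (res (root_unity N ^ k * t') - res (root_unity N ^ k * t)) \<le> 1/16"
      using res_close[of "root_unity N ^ k * t" "root_unity N ^ k * t'"] assms(2,3)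
      by (simp add: norm_mult)
  qed (use assms(1) in auto)
  finally show ?thesis .
qed

lemma norm_root_average_refine_le:
  assumes "N > 0" "M > 0" "cmod t \<le> R" "R * (2 * pi / real N) < d"
  shows "norm (root_average N t - root_average (N * M) t) \<le> 1/16"
proof -
  let ?I = "{..<N} \<times> {..<M}"
  have "root_average N t - root_average (N * M) t = (1 / real (card ?I)) *\<^sub>R
      (\<Sum>(j, l)\<in>?I. res (root_unity N ^ j * t) - res (root_unity N ^ j * (root_unity (N * M) ^ l * t)))"
    using root_average_eq_sum_product[OF assms(2), of N t] root_average_mult_eq_sum_product[OF assms(2)]
    by (simp add: case_prod_beta sum_subtractf scaleR_diff_right)
  also have "norm \<dots> \<le> 1/16"
  proof (rule norm_average_le)
    fix jl
    assume "jl \<in> ?I"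
    then obtain j l where jl: "jl = (j, l)" "l < M" by auto
    have "root_unity N ^ j * t - root_unity N ^ j * (root_unity (N * M) ^ l * t)
        = root_unity N ^ j * t * (1 - root_unity (N * M) ^ l)"
      by (simp add: algebra_simps)
    then have "cmod (root_unity N ^ j * t - root_unity N ^ j * (root_unity (N * M) ^ l * t))
        = cmod t * cmod (root_unity (N * M) ^ l - 1)"
      by (simp add: norm_mult norm_minus_commute)
    also have "\<dots> \<le> R * (2 * pi / real N)"
      using assms(3) norm_root_unity_power_minus_one_less[OF assms(1) jl(2)]
      by (intro mult_mono) (auto intro: order_trans[OF norm_ge_zero])
    finally have "cmod (root_unity N ^ j * t - root_unity N ^ j * (root_unity (N * M) ^ l * t)) < d"
      using assms(4) by linarith
    then show "norm (case jl of (j, l) \<Rightarrow>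
        res (root_unity N ^ j * t) - res (root_unity N ^ j * (root_unity (N * M) ^ l * t))) \<le> 1/16"
      using res_close[of "root_unity N ^ j * (root_unity (N * M) ^ l * t)" "root_unity N ^ j * t"]
        assms(3) jl(1) by (simp add: norm_mult)
  qed (use assms(1,2) in auto)
  finally show ?thesis .
qed

lemma root_average_near_one_step:
  assumes "N > 0" "R * (2 * pi / real N) < d"
    and "cmod t \<le> R" "cmod t' \<le> R" "cmod (t' - t) < d"
    and "norm (root_average N t - 1) \<le> 1/8"
  shows "norm (root_average N t' - 1) \<le> 1/8"
proof -
  define y where "y = of_complex (t' ^ N) * q ^ N"
  have "root_average N t' * (1 - y) = 1"
    using root_average_left_inverse[OF assms(1)] by (simp add: y_def)
  moreover have "root_average (N * 3) t' * (1 - y ^ 3) = 1"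
    using root_average_left_inverse[of "N * 3" t'] assms(1)
    by (simp add: y_def power_of_complex_mult power_mult)
  moreover have "norm (root_average N t' - 1) \<le> 3/16"
    using norm_root_average_diff_le[OF assms(1,3-5)] assms(6)
      norm_triangle_ineq[of "root_average N t' - root_average N t" "root_average N t - 1"]
    by simp
  moreover have "norm (root_average N t' - root_average (N * 3) t') \<le> 1/16"
    using norm_root_average_refine_le[OF assms(1) _ assms(4,2)] by simp
  ultimately show ?thesis
    by (rule left_inverse_near_one_of_cube)
qed

lemma root_average_near_one_at_radius:
  assumes "N > 0" "R * (2 * pi / real N) < d" "R > 0" "d > 0"
  shows "norm (root_average N (complex_of_real R) - 1) \<le> 1/8"
proof -
  obtain L :: nat where L: "R / d < real L"
    using reals_Archimedean2 by blast
  moreover have "R / d > 0"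
    using assms(3,4) by simp
  ultimately have "L > 0"
    by simp
  with L have "R / real L < d"
    using assms(4) by (simp add: field_simps)
  define t where "t j = complex_of_real (real j * R / real L)" for j
  have t_le: "cmod (t j) \<le> R" if "j \<le> L" for j
  proof -
    have "cmod (t j) = real j * R / real L"
      unfolding t_def norm_of_real using assms(3) by simp
    also have "\<dots> \<le> real L * R / real L"
      using that assms(3) by (intro divide_right_mono mult_right_mono) auto
    finally show ?thesis
      using \<open>L > 0\<close> by simp
  qed
  have "norm (root_average N (t j) - 1) \<le> 1/8" if "j \<le> L" for j
    using that
  proof (induction j)
    case 0
    then show ?case
      using root_average_0[OF assms(1)] by (simp add: t_def)
  next
    case (Suc j)
    have "real (Suc j) * R / real L - real j * R / real L = R / real L"
      by (simp add: algebra_simps flip: diff_divide_distrib)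
    then have "t (Suc j) - t j = complex_of_real (R / real L)"
      unfolding t_def by (metis of_real_diff)
    then have step: "cmod (t (Suc j) - t j) < d"
      using assms(3) \<open>R / real L < d\<close> by (simp only: norm_of_real) simp
    show ?case
      using Suc t_le by (intro root_average_near_one_step[OF assms(1,2) _ _ step]) simp_all
  qed
  moreover have "t L = complex_of_real R"
    using \<open>L > 0\<close> by (simp add: t_def)
  ultimately show ?thesis
    by fastforce
qed

end

lemma eventually_norm_power_le:
  assumes "R > 0"
  shows "\<exists>N0. \<forall>N\<ge>N0. R ^ N * norm (q ^ N) \<le> 1"
proof -
  obtain d where "d > 0" and d: "\<And>t t'. cmod t \<le> R \<Longrightarrow> cmod t' \<le> R \<Longrightarrow> cmod (t' - t) < d \<Longrightarrow>
      norm (res t' - res t) < 1/16"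
    using uniformly_continuous_onE[OF uniformly_continuous_on_res[of R], of "1/16"]
    by (auto simp: dist_norm)
  obtain N0 :: nat where N0: "R * (2 * pi) / d < real N0"
    using reals_Archimedean2 by blast
  have "R ^ N * norm (q ^ N) \<le> 1" if "N \<ge> N0" for N
  proof -
    have "R * (2 * pi) / d < real N"
      using N0 that by linarith
    moreover have "R * (2 * pi) / d > 0"
      using assms \<open>d > 0\<close> by simp
    ultimately have "N > 0"
      by simp
    with \<open>R * (2 * pi) / d < real N\<close> have "R * (2 * pi / real N) < d"
      using \<open>d > 0\<close> by (simp add: field_simps)
    then have "norm (root_average N (complex_of_real R) - 1) \<le> 1/8"
      using root_average_near_one_at_radius[of R d N] d \<open>N > 0\<close> assms \<open>d > 0\<close> by blast
    moreover have "root_average N (complex_of_real R) * (1 - of_complex (complex_of_real R ^ N) * q ^ N) = 1"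
      using root_average_left_inverse[OF \<open>N > 0\<close>] .
    ultimately have "norm (of_complex (complex_of_real R ^ N) * q ^ N) \<le> (1/8) / (1 - 1/8)"
      by (intro norm_le_if_left_inverse_near_one) auto
    then show ?thesis
      using assms by (simp add: norm_of_complex_mult norm_power)
  qed
  then show ?thesis by blast
qed

lemma topo_nilpotent_q: "topo_nilpotent q"
  using eventually_norm_power_le by (rule topo_nilpotentI_eventually)

end

lemma quasinilpotent_imp_topo_nilpotent:
  fixes q :: "'a::complex_banach_algebra_1"
  assumes "quasinilpotent q"
  shows "topo_nilpotent q"
proof -
  have "invertible_el (1 - of_complex t * q)" for t
  proof (cases "t = 0")
    case False
    then have "1 / t \<notin> spectrum q"
      using assms by (simp add: quasinilpotent_def)
    then have "invertible_el (of_complex (1 / t) - q)"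
      by (simp add: spectrum_def of_complex_def)
    then have "invertible_el (of_complex t * (of_complex (1 / t) - q))"
      using False by (intro invertible_el_mult invertible_el_of_complex)
    moreover have "of_complex t * (of_complex (1 / t) - q) = 1 - of_complex t * q"
      using False by (simp add: right_diff_distrib flip: of_complex_mult)
    ultimately show ?thesis
      by simp
  qed (simp add: invertible_el_def)
  then interpret entire_resolvent q
    by unfold_locales
  show ?thesis
    by (rule topo_nilpotent_q)
qed

lemma quasinilpotent_iff_topo_nilpotent:
  fixes q :: "'a::complex_banach_algebra_1"
  shows "quasinilpotent q \<longleftrightarrow> topo_nilpotent q"
  using quasinilpotent_imp_topo_nilpotent quasinilpotent_if_topo_nilpotent by blast

section \<open>Square roots and idempotent lifting\<close>

lemma suminf_commute:
  fixes f :: "nat \<Rightarrow> 'a::{real_normed_algebra,banach}"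
  assumes "summable f" "\<And>k. y * f k = f k * y"
  shows "y * suminf f = suminf f * y"
  using suminf_mult[OF assms(1), of y] suminf_mult2[OF assms(1), of y] assms(2) by simp

text \<open>Taylor coefficients of \<open>(1 - x) ^ (-1/2)\<close>.\<close>

definition inv_sqrt_coeff :: "nat \<Rightarrow> real" where
  "inv_sqrt_coeff k = ((-1/2) gchoose k) * (-1) ^ k"

lemma abs_gbinomial_minus_half_le_one: "\<bar>(-1/2::real) gchoose k\<bar> \<le> 1"
proof (induction k)
  case (Suc k)
  have step: "(-1/2::real) gchoose Suc k = ((-1/2) - real k) / real (Suc k) * ((-1/2) gchoose k)"
    using gbinomial_mult_1[of "-1/2::real" k] by (simp add: field_simps)
  have "\<bar>(-1/2::real) - real k\<bar> = real k + 1/2"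
    by simp
  then have "\<bar>((-1/2::real) - real k) / real (Suc k)\<bar> \<le> 1"
    by (simp add: abs_divide)
  then show ?case
    unfolding step abs_mult using Suc.IH by (intro mult_le_one) simp_all
qed simp

lemma gbinomial_minus_half_convolution:
  "(\<Sum>i\<le>k. ((-1/2::real) gchoose i) * ((-1/2) gchoose (k - i))) = (-1) ^ k"
proof -
  have "(\<Sum>i\<le>k. ((-1/2::real) gchoose i) * ((-1/2) gchoose (k - i))) = (-1/2 + -1/2) gchoose k"
    unfolding atMost_atLeast0 by (rule gbinomial_Vandermonde)
  also have "\<dots> = (-1) ^ k * ((of_nat k - (-1) - 1) gchoose k)"
    by (simp add: gbinomial_negated_upper[of "-1"])
  finally show ?thesis
    by (simp flip: binomial_gbinomial)
qed

lemma abs_inv_sqrt_coeff_le_one: "\<bar>inv_sqrt_coeff k\<bar> \<le> 1"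
  using abs_gbinomial_minus_half_le_one[of k] by (simp add: inv_sqrt_coeff_def abs_mult)

lemma inv_sqrt_coeff_convolution: "(\<Sum>i\<le>k. inv_sqrt_coeff i * inv_sqrt_coeff (k - i)) = 1"
proof -
  have "inv_sqrt_coeff i * inv_sqrt_coeff (k - i)
      = ((-1/2::real) gchoose i) * ((-1/2) gchoose (k - i)) * (-1) ^ k" if "i \<le> k" for i
    using that by (simp add: inv_sqrt_coeff_def mult_ac flip: power_add)
  then have "(\<Sum>i\<le>k. inv_sqrt_coeff i * inv_sqrt_coeff (k - i))
      = (\<Sum>i\<le>k. ((-1/2::real) gchoose i) * ((-1/2) gchoose (k - i))) * (-1) ^ k"
    by (simp add: sum_distrib_right)
  also have "\<dots> = ((-1) * (-1)) ^ k"
    unfolding gbinomial_minus_half_convolution by (simp flip: power_mult_distrib)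
  finally show ?thesis
    by simp
qed

lemma inv_sqrt_series_square:
  fixes w :: "'a::{real_normed_algebra_1,banach}"
  assumes "topo_nilpotent w"
  shows "(\<Sum>k. inv_sqrt_coeff k *\<^sub>R w ^ k) * (\<Sum>k. inv_sqrt_coeff k *\<^sub>R w ^ k) * (1 - w) = 1"
proof -
  define a where "a = (\<lambda>k. inv_sqrt_coeff k *\<^sub>R w ^ k)"
  have sa: "summable (\<lambda>k. norm (a k))"
    unfolding a_def using assms abs_inv_sqrt_coeff_le_one by (rule topo_nilpotent_summable)
  have sw: "summable (\<lambda>k. norm (w ^ k))"
    using topo_nilpotent_summable[OF assms, of "\<lambda>_. 1"] by simp
  have "suminf a * suminf a = (\<Sum>k. \<Sum>i\<le>k. a i * a (k - i))"
    by (rule Cauchy_product[OF sa sa])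
  also have "\<dots> = (\<Sum>k. w ^ k)"
  proof (rule suminf_cong)
    fix k
    have "a i * a (k - i) = (inv_sqrt_coeff i * inv_sqrt_coeff (k - i)) *\<^sub>R w ^ k" if "i \<le> k" for i
      using that by (simp add: a_def flip: power_add)
    then show "(\<Sum>i\<le>k. a i * a (k - i)) = w ^ k"
      by (simp add: inv_sqrt_coeff_convolution flip: scaleR_sum_left)
  qed
  finally show ?thesis
    using neumann_series(2)[OF sw] by (simp add: a_def)
qed

lemma inverse_sqrt_one_minus:
  fixes w :: "'a::{real_normed_algebra_1,banach}"
  assumes "topo_nilpotent w"
  obtains s where "s * s * (1 - w) = 1" "topo_nilpotent (s - 1)"
    "\<And>y. y * w = w * y \<Longrightarrow> y * s = s * y"
proof -
  define s h where "s = (\<Sum>k. inv_sqrt_coeff k *\<^sub>R w ^ k)"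
    and "h = (\<Sum>k. inv_sqrt_coeff (Suc k) *\<^sub>R w ^ k)"
  have s_summable: "summable (\<lambda>k. inv_sqrt_coeff k *\<^sub>R w ^ k)"
    using topo_nilpotent_summable[OF assms abs_inv_sqrt_coeff_le_one] by (rule summable_norm_cancel)
  have sh: "summable (\<lambda>k. inv_sqrt_coeff (Suc k) *\<^sub>R w ^ k)"
    using topo_nilpotent_summable[OF assms, of "\<lambda>k. inv_sqrt_coeff (Suc k)"] abs_inv_sqrt_coeff_le_one
    by (auto intro: summable_norm_cancel)
  have "s - 1 = w * h"
  proof -
    have "(\<Sum>k. inv_sqrt_coeff (Suc k) *\<^sub>R w ^ Suc k) = s - inv_sqrt_coeff 0 *\<^sub>R w ^ 0"
      unfolding s_def by (rule suminf_split_head[OF s_summable])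
    moreover have "(\<Sum>k. inv_sqrt_coeff (Suc k) *\<^sub>R w ^ Suc k) = w * h"
      unfolding h_def suminf_mult[OF sh, symmetric] by simp
    ultimately show ?thesis
      by (simp add: inv_sqrt_coeff_def)
  qed
  have h_commute: "y * h = h * y" if "y * w = w * y" for y
    unfolding h_def using sh
    by (rule suminf_commute) (simp add: power_commuting_commutes[OF that[symmetric]])
  show ?thesis
  proof (rule that)
    show "s * s * (1 - w) = 1"
      unfolding s_def by (rule inv_sqrt_series_square[OF assms])
    have "topo_nilpotent (w * h)"
      using h_commute[of w] by (intro topo_nilpotent_mult_commute[OF assms]) simp
    then show "topo_nilpotent (s - 1)"
      using \<open>s - 1 = w * h\<close> by simp
    show "y * s = s * y" if "y * w = w * y" for y
    proof -
      have "y * (w * h) = (w * h) * y"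
        using h_commute[OF that] that by (metis mult.assoc)
      then show ?thesis
        using \<open>s - 1 = w * h\<close> by (simp add: eq_diff_eq algebra_simps)
    qed
  qed
qed

lemma idempotent_of_involution:
  fixes u :: "'a::real_algebra_1"
  assumes "u * u = 1"
  shows "((1/2) *\<^sub>R (1 + u)) * ((1/2) *\<^sub>R (1 + u)) = (1/2) *\<^sub>R (1 + u)"
proof -
  have "(1 + u) * (1 + u) = 2 *\<^sub>R (1 + u)"
    using assms by (simp add: algebra_simps scaleR_2)
  then show ?thesis
    by simp
qed

lemma involution_of_inverse_sqrt:
  fixes d s :: "'a::ring_1"
  assumes "s * s * (d * d) = 1" "d * s = s * d"
  shows "(d * s) * (d * s) = 1"
proof -
  have "(d * s) * (d * s) = (d * d) * (s * s)"
    by (metis assms(2) mult.assoc)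
  also have "\<dots> = s * s * (d * d)"
    using power_mult_power_commute[OF assms(2), of 2 2] by (simp add: power2_eq_square)
  finally show ?thesis
    using assms(1) by simp
qed

text \<open>With \<open>d = 2 e - 1\<close> we have \<open>d\<^sup>2 = 1 + 4 (e\<^sup>2 - e)\<close>, so \<open>d (d\<^sup>2)\<^sup>-\<^sup>1\<^sup>/\<^sup>2\<close> is an involution
  commuting with \<open>e\<close> and close to \<open>d\<close>; the idempotent is half of one plus it.\<close>

lemma idempotent_lifting:
  fixes e :: "'a::{real_normed_algebra_1,banach}"
  assumes "topo_nilpotent (e * e - e)"
  obtains p where "p * p = p" "topo_nilpotent (p - e)" "\<And>y. y * e = e * y \<Longrightarrow> y * p = p * y"
proof -
  define w where "w = (-4) *\<^sub>R (e * e - e)"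
  obtain s where s: "s * s * (1 - w) = 1" "topo_nilpotent (s - 1)"
    and s_commute: "\<And>y. y * w = w * y \<Longrightarrow> y * s = s * y"
    using inverse_sqrt_one_minus[OF topo_nilpotent_scaleR[OF assms]] unfolding w_def by blast
  have w_commute: "y * w = w * y" if "y * e = e * y" for y
    using that mult_left_commute_if_commute[OF that] by (simp add: w_def algebra_simps)
  define d where "d = 2 *\<^sub>R e - 1"
  define u where "u = d * s"
  define p where "p = (1/2) *\<^sub>R (1 + u)"
  have es: "e * s = s * e"
    by (rule s_commute[OF w_commute]) simp
  have ds: "d * s = s * d"
    using es by (simp add: d_def algebra_simps)
  have "d * d = 1 - w"
    by (simp add: d_def w_def algebra_simps) (simp flip: scaleR_left_distrib)
  then have "u * u = 1"
    unfolding u_def using s(1) ds by (intro involution_of_inverse_sqrt) simp_all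
  then have "p * p = p"
    unfolding p_def by (rule idempotent_of_involution)
  moreover have "topo_nilpotent (p - e)"
  proof -
    have "1 + u = 2 *\<^sub>R e + (s - 1) * d"
      using ds by (simp add: u_def d_def algebra_simps)
    then have "p - e = (1/2) *\<^sub>R ((s - 1) * d)"
      by (simp add: p_def scaleR_add_right)
    moreover have "(s - 1) * d = d * (s - 1)"
      using ds by (simp add: algebra_simps)
    ultimately show ?thesis
      using topo_nilpotent_mult_commute[OF s(2)] by (simp add: topo_nilpotent_scaleR)
  qed
  moreover have "y * p = p * y" if "y * e = e * y" for y
  proof -
    have "y * s = s * y"
      using s_commute[OF w_commute[OF that]] .
    then show ?thesis
      using that mult_left_commute_if_commute[OF that] mult_left_commute_if_commute[of y s]
      by (simp add: p_def u_def d_def algebra_simps)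
  qed
  ultimately show ?thesis
    using that by blast
qed

section \<open>Hirano inverses\<close>

lemma topo_nilpotent_iff_split_by_idempotent:
  fixes u p :: "'a::real_normed_algebra_1"
  assumes "p * p = p" "u * p = p * u"
  shows "topo_nilpotent u \<longleftrightarrow> topo_nilpotent (u * p) \<and> topo_nilpotent (u * (1 - p))"
proof
  assume "topo_nilpotent u"
  moreover have "u * (1 - p) = (1 - p) * u"
    using assms(2) by (simp add: algebra_simps)
  ultimately show "topo_nilpotent (u * p) \<and> topo_nilpotent (u * (1 - p))"
    using assms(2) topo_nilpotent_mult_commute by blast
next
  assume "topo_nilpotent (u * p) \<and> topo_nilpotent (u * (1 - p))"
  moreover have "u * p * (u * (1 - p)) = 0" "u * (1 - p) * (u * p) = 0"
  proof -
    have "p * (p * z) = p * z" for z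
      using assms(1) by (simp flip: mult.assoc)
    then show "u * p * (u * (1 - p)) = 0" "u * (1 - p) * (u * p) = 0"
      using assms(1) assms(2)[symmetric] mult_left_commute_if_commute[OF assms(2)[symmetric]]
      by (simp_all add: algebra_simps)
  qed
  ultimately have "topo_nilpotent (u * p + u * (1 - p))"
    by (intro topo_nilpotent_add_orthogonal) auto
  then show "topo_nilpotent u"
    by (simp add: algebra_simps)
qed

lemma topo_nilpotent_power_diff_shift:
  fixes a :: "'a::real_normed_algebra_1"
  assumes "m \<ge> 1" "topo_nilpotent (a ^ m - a ^ (m + k))"
  shows "topo_nilpotent (a - a ^ (k + 1))"
proof -
  define b where "b = 1 - a ^ k"
  have ab: "a * b = b * a"
    by (simp add: b_def algebra_simps power_commutes)
  have "a ^ m - a ^ (m + k) = a ^ m * b"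
    by (simp add: b_def right_diff_distrib power_add)
  then have "topo_nilpotent (a ^ m * b)"
    using assms(2) by simp
  moreover have "(a ^ m * b) * b ^ (m - 1) = b ^ (m - 1) * (a ^ m * b)"
  proof -
    have "(a ^ m * b) * b ^ (m - 1) = (a ^ m * b ^ (m - 1)) * b"
      by (simp add: mult.assoc power_commutes)
    then show ?thesis
      by (simp add: power_mult_power_commute[OF ab] mult.assoc)
  qed
  ultimately have "topo_nilpotent ((a ^ m * b) * b ^ (m - 1))"
    by (rule topo_nilpotent_mult_commute)
  moreover have "(a * b) ^ m = (a ^ m * b) * b ^ (m - 1)"
  proof -
    have "b ^ m = b * b ^ (m - 1)"
      using assms(1) by (cases m) simp_all
    then show ?thesis
      by (simp add: power_mult_distrib_commuting[OF ab] mult.assoc)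
  qed
  ultimately have "topo_nilpotent (a * b)"
    using assms(1) by (intro topo_nilpotent_of_power[of "a * b" m]) simp_all
  then show ?thesis
    by (simp add: b_def algebra_simps)
qed

lemma topo_nilpotent_of_Hirano_inverse:
  fixes a x :: "'a::real_normed_algebra_1"
  assumes "x * a * x = x" "a * x = x * a" "topo_nilpotent (a - a ^ (n + 2) * x)"
  shows "topo_nilpotent (a - a ^ (n + 1))"
proof -
  define p an where "p = a * x" and "an = a ^ n"
  have "x * (a * x) = x"
    using assms(1) by (simp add: mult.assoc)
  then have pp: "p * p = p"
    by (simp add: p_def mult.assoc)
  have pa: "p * a = a * p"
    by (simp add: p_def mult.assoc flip: assms(2))
  have pan: "p * an = an * p" and ana: "an * a = a * an"
    using power_commuting_commutes[OF pa[symmetric], of n] by (simp_all add: an_def power_commutes)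
  note comm = pp pa pan ana mult_left_commute_if_commute[OF pa] mult_left_commute_if_commute[OF pan]
    mult_left_commute_if_commute[OF ana]
  have pp': "p * (p * z) = p * z" for z
    by (simp add: mult.assoc[symmetric] pp)
  define B q where "B = a - a * (an * p)" and "q = a - a * an"
  have "a ^ (n + 2) * x = a ^ Suc n * p"
    by (simp only: p_def add_2_eq_Suc' power_Suc2 mult.assoc)
  then have "a ^ (n + 2) * x = a * (an * p)"
    by (simp add: an_def mult.assoc)
  then have "topo_nilpotent B"
    using assms(3) by (simp add: B_def)
  moreover have "B * p = p * B"
    by (simp add: B_def algebra_simps comm)
  moreover have "B * p = q * p" "B * (1 - p) = a * (1 - p)"
    by (simp_all add: B_def q_def algebra_simps comm pp')
  ultimately have qp: "topo_nilpotent (q * p)" and ap: "topo_nilpotent (a * (1 - p))"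
    using topo_nilpotent_iff_split_by_idempotent[OF pp, of B] by simp_all
  have "(a * (1 - p)) * (1 - an) = (1 - an) * (a * (1 - p))"
    by (simp add: algebra_simps comm)
  with ap have "topo_nilpotent ((a * (1 - p)) * (1 - an))"
    by (rule topo_nilpotent_mult_commute)
  moreover have "(a * (1 - p)) * (1 - an) = q * (1 - p)"
    by (simp add: q_def algebra_simps comm)
  moreover have "q * p = p * q"
    by (simp add: q_def algebra_simps comm)
  ultimately have "topo_nilpotent q"
    using qp topo_nilpotent_iff_split_by_idempotent[OF pp, of q] by simp
  then show ?thesis
    by (simp add: q_def an_def)
qed

lemma topo_nilpotent_power_idempotent_defect:
  fixes a :: "'a::real_normed_algebra_1"
  assumes "n \<ge> 1" "topo_nilpotent (a - a ^ (n + 1))"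
  shows "topo_nilpotent (a ^ n * a ^ n - a ^ n)"
proof -
  define b where "b = a ^ (n - 1)"
  have an: "a ^ n = b * a"
    using assms(1) by (simp add: b_def flip: power_Suc2)
  have ab: "a * b = b * a"
    by (simp add: b_def power_commutes)
  define q where "q = a - b * a * a"
  have "topo_nilpotent q"
    using assms(2) by (simp add: q_def an mult.assoc mult_left_commute_if_commute[OF ab])
  moreover have "q * b = b * q"
    by (simp add: q_def algebra_simps ab mult_left_commute_if_commute[OF ab])
  ultimately have "topo_nilpotent (- (q * b))"
    by (intro topo_nilpotent_uminus topo_nilpotent_mult_commute)
  moreover have "- (q * b) = a ^ n * a ^ n - a ^ n"
    by (simp add: q_def an algebra_simps ab mult_left_commute_if_commute[OF ab])
  ultimately show ?thesis
    by simp
qed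

lemma Hirano_inverse_of_idempotent:
  fixes a p :: "'a::{real_normed_algebra_1,banach}"
  assumes "n \<ge> 1" "p * p = p" "p * a = a * p" "topo_nilpotent (p - a ^ n)"
  obtains x where "x * a * x = x" "a * x = x * a" "a * x = p"
proof -
  define b where "b = a ^ (n - 1)"
  have an: "a ^ n = b * a"
    using assms(1) by (simp add: b_def flip: power_Suc2)
  have ab: "a * b = b * a"
    by (simp add: b_def power_commutes)
  have pb: "p * b = b * p"
    unfolding b_def by (rule power_commuting_commutes[OF assms(3)[symmetric], symmetric])
  note comm = ab assms(2,3) pb mult_left_commute_if_commute[OF ab]
    mult_left_commute_if_commute[OF assms(3)] mult_left_commute_if_commute[OF pb]
  have pp': "p * (p * z) = p * z" for z
    using assms(2) by (simp flip: mult.assoc)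
  define g where "g = p - b * a"
  have ga: "g * a = a * g"
    by (simp add: g_def algebra_simps comm)
  have "invertible_el (1 - g)"
    using assms(4) by (simp add: g_def an topo_nilpotent_invertible_one_minus)
  define v where "v = inverse_el (1 - g)"
  have v: "(1 - g) * v = 1"
    using invertible_el_inverse[OF \<open>invertible_el (1 - g)\<close>] by (simp add: v_def)
  have va: "v * a = a * v"
    using inverse_el_commute[OF \<open>invertible_el (1 - g)\<close>, of a] ga
    by (simp add: v_def algebra_simps)
  define x where "x = b * p * v"
  have "a * x = (b * a * p) * v"
    by (simp add: x_def mult.assoc comm)
  also have "b * a * p = p * (1 - g)"
    by (simp add: g_def algebra_simps comm pp')
  finally have ax: "a * x = p"
    using v by (simp add: mult.assoc)
  have xa: "x * a = a * x"
  proof -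
    have "x * a = b * p * (v * a)"
      by (simp add: x_def mult.assoc)
    also have "\<dots> = a * x"
      by (simp add: va x_def mult.assoc comm)
    finally show ?thesis .
  qed
  have "x * a * x = p * x"
    by (simp add: xa ax)
  also have "\<dots> = x"
    by (simp add: x_def mult.assoc comm pp')
  finally have "x * a * x = x" .
  with xa ax show ?thesis
    by (intro that) simp_all
qed

lemma topo_nilpotent_Hirano_defect:
  fixes a p :: "'a::real_normed_algebra_1"
  assumes "n \<ge> 1" "p * p = p" "p * a = a * p"
    and "topo_nilpotent (p - a ^ n)" "topo_nilpotent (a - a ^ (n + 1))"
  shows "topo_nilpotent (a - a ^ (n + 1) * p)"
proof -
  define an where "an = a ^ n"
  have ana: "an * a = a * an" and pan: "p * an = an * p"
    using power_commuting_commutes[OF assms(3)[symmetric], of n]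
    by (simp_all add: an_def power_commutes)
  note comm = assms(2,3) ana pan mult_left_commute_if_commute[OF assms(3)]
    mult_left_commute_if_commute[OF pan] mult_left_commute_if_commute[OF ana]
  have pp': "p * (p * z) = p * z" for z
    using assms(2) by (simp flip: mult.assoc)
  define B q where "B = a - a * an * p" and "q = a - a * an"
  have "topo_nilpotent q"
    using assms(5) by (simp add: q_def an_def)
  have Bp: "B * p = p * B"
    by (simp add: B_def algebra_simps comm pp')
  have "B * p = q * p" "q * p = p * q"
    by (simp_all add: B_def q_def algebra_simps comm pp')
  then have "topo_nilpotent (B * p)"
    using topo_nilpotent_mult_commute[OF \<open>topo_nilpotent q\<close>] by simp
  moreover have "topo_nilpotent (a * (1 - p))"
  proof (rule topo_nilpotent_of_power)
    have "(a * (1 - p)) ^ n = a ^ n * (1 - p) ^ n"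
      by (rule power_mult_distrib_commuting) (simp add: algebra_simps comm)
    also have "(1 - p) ^ n = 1 - p"
      using assms(1,2) by (intro idempotent_power) (simp_all add: algebra_simps)
    also have "a ^ n * (1 - p) = - ((p - a ^ n) * (1 - p))"
      by (simp add: an_def[symmetric] algebra_simps comm pp')
    finally have "(a * (1 - p)) ^ n = - ((p - a ^ n) * (1 - p))" .
    moreover have "topo_nilpotent ((p - a ^ n) * (1 - p))"
      using assms(4) by (rule topo_nilpotent_mult_commute)
        (simp add: an_def[symmetric] algebra_simps comm pp')
    ultimately show "topo_nilpotent ((a * (1 - p)) ^ n)"
      by (simp add: topo_nilpotent_uminus)
  qed (use assms(1) in simp)
  moreover have "B * (1 - p) = a * (1 - p)"
    by (simp add: B_def algebra_simps comm pp')
  ultimately have "topo_nilpotent B"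
    using topo_nilpotent_iff_split_by_idempotent[OF assms(2) Bp] by simp
  then show ?thesis
    by (simp add: B_def an_def mult.assoc)
qed

lemma Hirano_inverse_exists:
  fixes a :: "'a::{real_normed_algebra_1,banach}"
  assumes "n \<ge> 1" "topo_nilpotent (a - a ^ (n + 1))"
  shows "\<exists>x. x * a * x = x \<and> a * x = x * a \<and> topo_nilpotent (a - a ^ (n + 2) * x)"
proof -
  obtain p where p: "p * p = p" "topo_nilpotent (p - a ^ n)"
    and "\<And>y. y * a ^ n = a ^ n * y \<Longrightarrow> y * p = p * y"
    using idempotent_lifting[OF topo_nilpotent_power_idempotent_defect[OF assms]] by blast
  then have pa: "p * a = a * p"
    by (metis power_commutes)
  obtain x where x: "x * a * x = x" "a * x = x * a" "a * x = p"
    using Hirano_inverse_of_idempotent[OF assms(1) p(1) pa p(2)] by blast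
  have "n + 2 = Suc (n + 1)"
    by simp
  then have "a ^ (n + 2) * x = a ^ (n + 1) * (a * x)"
    by (simp only: power_Suc2 mult.assoc)
  then have "a ^ (n + 2) * x = a ^ (n + 1) * p"
    by (simp add: x(3))
  then have "topo_nilpotent (a - a ^ (n + 2) * x)"
    using topo_nilpotent_Hirano_defect[OF assms(1) p(1) pa p(2) assms(2)] by simp
  then show ?thesis
    using x by blast
qed

lemma exists_topo_nilpotent_shift_of_power_diff:
  fixes a :: "'a::real_normed_algebra_1"
  assumes "m \<ge> 1" "n \<ge> 1" "m \<noteq> n" "topo_nilpotent (a ^ m - a ^ n)"
  shows "\<exists>k\<ge>1. topo_nilpotent (a - a ^ (k + 1))"
proof (cases "m < n")
  case True
  then have "topo_nilpotent (a - a ^ ((n - m) + 1))"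
    using assms(1,4) topo_nilpotent_power_diff_shift[of m a "n - m"] by simp
  then show ?thesis
    using True by (intro exI[of _ "n - m"]) simp
next
  case False
  then have "n < m"
    using assms(3) by simp
  have "topo_nilpotent (a ^ n - a ^ m)"
    using topo_nilpotent_uminus[OF assms(4)] by simp
  then have "topo_nilpotent (a - a ^ ((m - n) + 1))"
    using assms(2) \<open>n < m\<close> topo_nilpotent_power_diff_shift[of n a "m - n"] by simp
  then show ?thesis
    using \<open>n < m\<close> by (intro exI[of _ "m - n"]) simp
qed

lemma gpi_Hirano_invertible_iff_topo_nilpotent:
  fixes a :: "'a::complex_banach_algebra_1"
  shows "gpi_Hirano_invertible a \<longleftrightarrow> (\<exists>n\<ge>1. topo_nilpotent (a - a ^ (n + 1)))"
  unfolding gpi_Hirano_invertible_def quasinilpotent_iff_topo_nilpotent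
  using topo_nilpotent_of_Hirano_inverse Hirano_inverse_exists by blast

theorem theorem2p2:
  fixes a :: "'a::complex_banach_algebra_1"
  shows "(gpi_Hirano_invertible a
            \<longleftrightarrow> (\<exists>n::nat. n \<ge> 1 \<and> quasinilpotent (a - a ^ (n + 1))))
       \<and> ((\<exists>n::nat. n \<ge> 1 \<and> quasinilpotent (a - a ^ (n + 1)))
            \<longleftrightarrow> (\<exists>m n::nat. m \<ge> 1 \<and> n \<ge> 1 \<and> m \<noteq> n \<and> quasinilpotent (a ^ m - a ^ n)))"
proof -
  have "(\<exists>n::nat. n \<ge> 1 \<and> topo_nilpotent (a - a ^ (n + 1)))
      \<longleftrightarrow> (\<exists>m n::nat. m \<ge> 1 \<and> n \<ge> 1 \<and> m \<noteq> n \<and> topo_nilpotent (a ^ m - a ^ n))"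
  proof
    assume "\<exists>n::nat. n \<ge> 1 \<and> topo_nilpotent (a - a ^ (n + 1))"
    then obtain n :: nat where "n \<ge> 1" "topo_nilpotent (a - a ^ (n + 1))"
      by blast
    then show "\<exists>m n::nat. m \<ge> 1 \<and> n \<ge> 1 \<and> m \<noteq> n \<and> topo_nilpotent (a ^ m - a ^ n)"
      by (intro exI[of _ 1] exI[of _ "n + 1"]) simp
  next
    assume "\<exists>m n::nat. m \<ge> 1 \<and> n \<ge> 1 \<and> m \<noteq> n \<and> topo_nilpotent (a ^ m - a ^ n)"
    then show "\<exists>n::nat. n \<ge> 1 \<and> topo_nilpotent (a - a ^ (n + 1))"
      using exists_topo_nilpotent_shift_of_power_diff by blast
  qed
  then show ?thesis
    unfolding quasinilpotent_iff_topo_nilpotent gpi_Hirano_invertible_iff_topo_nilpotent by blast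
qed

end
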